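(* Consider the online firefighter game on the infinite square grid $\mathbb{L}_2=\mathbb{Z}\times\mathbb{Z}$ (described in the context). There is an online strategy for Player 1 that wins against every firefighter sequence $(f_i)_{i\geq 1}$ revealed by Player 2 for which there exists $N\geq 1$ with $\sum_{i=1}^N f_i\geq 16\cdot N$.
   Context: The grid $\mathbb{L}_2$ has vertex set $\mathbb{Z}\times\mathbb{Z}$, with $(x,y)$ adjacent to $(x',y')$ iff $|x-x'|+|y-y'|=1$. A fire starts at an ignition vertex $v$ at time $0$ (so $v$ is burning). A firefighter sequence is a sequence $(f_i)_{i\geq 1}$ of non-negative integers. At each turn $i\geq 1$: Player 1 chooses at most $f_i$ vertices that are neither burning nor protected and protects them; then the fire spreads from every burning vertex to all of its unprotected neighbours. Once a vertex is burning or protected it remains so forever; unused firefighters are not carried over. Player 2 wins if at every turn some new vertex starts burning; otherwise Player 1 wins (the fire is contained). In the online version the sequence is chosen by Player 2 and revealed turn by turn: at turn $i$ Player 2 reveals $f_i$ to Player 1 just before Player 1 places firefighters, so an online strategy of Player 1 chooses its moves at turn $i$ based only on $f_1,\dots,f_i$ and the history of the game so far (in particular without knowing $N$ in advance). *)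

theory Defs
  imports Main
begin

type_synonym vertex = "int \<times> int"

text \<open>A (deterministic) online strategy of Player 1: given the ignition vertex and the
  revealed prefix [f 1, ..., f i] of the firefighter sequence, it returns the set of
  vertices to protect at turn i. (The rest of the history is determined by these data.)\<close>
type_synonym strategy = "vertex \<Rightarrow> nat list \<Rightarrow> vertex set"

definition adj :: "vertex \<Rightarrow> vertex \<Rightarrow> bool" where
  "adj p q \<longleftrightarrow> \<bar>fst p - fst q\<bar> + \<bar>snd p - snd q\<bar> = 1"

definition spread :: "vertex set \<Rightarrow> vertex set \<Rightarrow> vertex set" where
  "spread B P = B \<union> {w. w \<notin> P \<and> (\<exists>u\<in>B. adj u w)}"

definition move :: "vertex \<Rightarrow> strategy \<Rightarrow> (nat \<Rightarrow> nat) \<Rightarrow> nat \<Rightarrow> vertex set" where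
  "move v \<sigma> f i = \<sigma> v (map f [1..<Suc i])"

fun play :: "vertex \<Rightarrow> strategy \<Rightarrow> (nat \<Rightarrow> nat) \<Rightarrow> nat \<Rightarrow> vertex set \<times> vertex set" where
  "play v \<sigma> f 0 = ({v}, {})"
| "play v \<sigma> f (Suc i) =
     (let B = fst (play v \<sigma> f i);
          P' = snd (play v \<sigma> f i) \<union> move v \<sigma> f (Suc i)
      in (spread B P', P'))"

definition legal :: "vertex \<Rightarrow> strategy \<Rightarrow> (nat \<Rightarrow> nat) \<Rightarrow> nat \<Rightarrow> bool" where
  "legal v \<sigma> f i \<longleftrightarrow>
     (let S = move v \<sigma> f i; B = fst (play v \<sigma> f (i - 1)); P = snd (play v \<sigma> f (i - 1))
      in finite S \<and> card S \<le> f i \<and> S \<inter> (B \<union> P) = {})"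

definition P1_wins :: "vertex \<Rightarrow> strategy \<Rightarrow> (nat \<Rightarrow> nat) \<Rightarrow> bool" where
  "P1_wins v \<sigma> f \<longleftrightarrow>
     (\<exists>n\<ge>1. (\<forall>i\<in>{1..n}. legal v \<sigma> f i) \<and> fst (play v \<sigma> f n) = fst (play v \<sigma> f (n - 1)))"

end

theory Submission
  imports Defs
begin

text \<open>Player 1 spends all firefighters on the \<open>\<ell>\<^sub>1\<close>-sphere (a diamond of \<open>4r\<close> vertices) of some
  radius \<open>r\<close> around the ignition vertex. As long as \<open>r\<close> is at least the current turn the fire,
  which has radius at most \<open>i - 1\<close> before turn \<open>i\<close>, cannot touch that sphere; once it could, the
  unfinished sphere is abandoned and a new one of radius \<open>2i\<close> is started at turn \<open>i\<close>. An
  amortisation argument shows that, without a completed sphere, the firefighters of turns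
  \<open>1..i\<close> number at most \<open>c + 4r - 8\<close> with \<open>r \<le> 2i\<close>, where \<open>c < 4r + 2\<close> counts the sphere
  vertices placed so far; this is below \<open>16i\<close>. So if \<open>\<Sum>i=1..N. f i \<ge> 16N\<close>, some sphere is
  completed by turn \<open>N\<close>, the fire is trapped in the finite ball inside it and stops growing.\<close>

definition grid_dist :: "vertex \<Rightarrow> vertex \<Rightarrow> int" where
  "grid_dist v p = \<bar>fst p - fst v\<bar> + \<bar>snd p - snd v\<bar>"

lemma grid_dist_adj_le: "adj u w \<Longrightarrow> grid_dist v w \<le> grid_dist v u + 1"
  unfolding adj_def grid_dist_def by arith

lemma finite_grid_ball: "finite {p. grid_dist v p < R}"
proof (rule finite_subset)
  show "{p. grid_dist v p < R} \<subseteq> {fst v - R..fst v + R} \<times> {snd v - R..snd v + R}"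
    unfolding grid_dist_def by (auto simp: abs_le_iff abs_less_iff)
qed simp

lemma play_Suc_fst:
  "fst (play v \<sigma> f (Suc i)) = spread (fst (play v \<sigma> f i)) (snd (play v \<sigma> f (Suc i)))"
  by (simp add: Let_def)

lemma play_Suc_snd: "snd (play v \<sigma> f (Suc i)) = snd (play v \<sigma> f i) \<union> move v \<sigma> f (Suc i)"
  by (simp add: Let_def)

declare play.simps(2) [simp del]

lemma burning_mono: "i \<le> j \<Longrightarrow> fst (play v \<sigma> f i) \<subseteq> fst (play v \<sigma> f j)"
  by (rule lift_Suc_mono_le[where f = "\<lambda>i. fst (play v \<sigma> f i)"])
    (auto simp: play_Suc_fst spread_def)

lemma protected_mono: "i \<le> j \<Longrightarrow> snd (play v \<sigma> f i) \<subseteq> snd (play v \<sigma> f j)"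
  by (rule lift_Suc_mono_le[where f = "\<lambda>i. snd (play v \<sigma> f i)"]) (auto simp: play_Suc_snd)

lemma burning_within_dist: "fst (play v \<sigma> f i) \<subseteq> {p. grid_dist v p \<le> int i}"
proof (induction i)
  case 0
  then show ?case by (simp add: grid_dist_def)
next
  case (Suc i)
  then show ?case
    by (auto simp: play_Suc_fst spread_def dest!: grid_dist_adj_le[where v = v])
qed

lemma fire_confined_by_protected_sphere:
  assumes inside: "fst (play v \<sigma> f m) \<subseteq> {p. grid_dist v p < R}"
    and sphere: "{p. grid_dist v p = R} \<subseteq> snd (play v \<sigma> f (Suc m))"
    and "m \<le> n"
  shows "fst (play v \<sigma> f n) \<subseteq> {p. grid_dist v p < R}"
  using \<open>m \<le> n\<close>
proof (induction n rule: nat_induct_at_least)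
  case base
  then show ?case using inside .
next
  case (Suc n)
  have sphere_protected: "{p. grid_dist v p = R} \<subseteq> snd (play v \<sigma> f (Suc n))"
    using sphere protected_mono[of "Suc m" "Suc n" v \<sigma> f] \<open>m \<le> n\<close> by simp
  show ?case
  proof
    fix w assume "w \<in> fst (play v \<sigma> f (Suc n))"
    then consider "w \<in> fst (play v \<sigma> f n)"
      | u where "u \<in> fst (play v \<sigma> f n)" "adj u w" "w \<notin> snd (play v \<sigma> f (Suc n))"
      by (auto simp: play_Suc_fst spread_def)
    then show "w \<in> {p. grid_dist v p < R}"
    proof cases
      case 2
      then have "grid_dist v w \<le> grid_dist v u + 1" "grid_dist v u < R" "grid_dist v w \<noteq> R"
        using grid_dist_adj_le Suc.IH sphere_protected by auto
      then show ?thesis by simp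
    qed (use Suc.IH in blast)
  qed
qed

lemma mono_chain_in_finite_set_stabilises:
  fixes B :: "nat \<Rightarrow> 'a set"
  assumes mono: "\<And>n. B n \<subseteq> B (Suc n)" and bounded: "\<And>n. m \<le> n \<Longrightarrow> B n \<subseteq> F"
    and "finite F"
  shows "\<exists>n>m. B n = B (n - 1)"
proof (rule ccontr)
  assume "\<not> ?thesis"
  then have grows: "B (m + k) \<subset> B (m + Suc k)" for k
    using mono[of "m + k"] by (metis add_Suc_right diff_Suc_1 less_add_Suc1 psubsetI)
  have "k \<le> card (B (m + k))" for k
  proof (induction k)
    case (Suc k)
    have "finite (B (m + Suc k))"
      using bounded[of "m + Suc k"] \<open>finite F\<close> finite_subset by auto
    then have "card (B (m + k)) < card (B (m + Suc k))"
      using grows psubset_card_mono by blast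
    then show ?case using Suc.IH by simp
  qed simp
  moreover have "card (B (m + Suc (card F))) \<le> card F"
    using bounded[of "m + Suc (card F)"] \<open>finite F\<close> card_mono by simp
  ultimately show False
    using Suc_n_not_le_n le_trans by blast
qed

lemma P1_wins_if_fire_confined:
  assumes "\<And>i. 1 \<le> i \<Longrightarrow> legal v \<sigma> f i" and "finite F"
    and "\<And>n. m \<le> n \<Longrightarrow> fst (play v \<sigma> f n) \<subseteq> F"
  shows "P1_wins v \<sigma> f"
proof -
  have "fst (play v \<sigma> f n) \<subseteq> fst (play v \<sigma> f (Suc n))" for n
    using burning_mono le_SucI by blast
  then obtain n where "n > m" "fst (play v \<sigma> f n) = fst (play v \<sigma> f (n - 1))"
    using mono_chain_in_finite_set_stabilises[where B = "\<lambda>n. fst (play v \<sigma> f n)"] assms(2,3)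
    by blast
  then show ?thesis
    using assms(1) unfolding P1_wins_def by (intro exI[of _ n]) auto
qed

text \<open>The upper half of the sphere of radius \<open>r\<close> is enumerated by \<open>k < 2r + 1\<close>, the lower half by
  \<open>2r + 1 \<le> k < 4r + 2\<close>; the two vertices on the horizontal axis are listed twice.\<close>
definition sphere_point :: "vertex \<Rightarrow> nat \<Rightarrow> nat \<Rightarrow> vertex" where
  "sphere_point v r k =
     (if k < 2*r + 1 then (fst v + (int k - int r), snd v + (int r - \<bar>int k - int r\<bar>))
      else (fst v + (int (k - (2*r + 1)) - int r),
            snd v + (\<bar>int (k - (2*r + 1)) - int r\<bar> - int r)))"

definition sphere_slots :: "nat \<Rightarrow> nat" where
  "sphere_slots r = 4*r + 2"

lemma grid_dist_sphere_point: "k < sphere_slots r \<Longrightarrow> grid_dist v (sphere_point v r k) = int r"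
  unfolding sphere_point_def grid_dist_def sphere_slots_def by auto

lemma sphere_eq_sphere_point_image:
  "{p. grid_dist v p = int r} = sphere_point v r ` {0..<sphere_slots r}"
proof
  show "sphere_point v r ` {0..<sphere_slots r} \<subseteq> {p. grid_dist v p = int r}"
    by (auto simp: grid_dist_sphere_point)
next
  show "{p. grid_dist v p = int r} \<subseteq> sphere_point v r ` {0..<sphere_slots r}"
  proof
    fix p assume "p \<in> {p. grid_dist v p = int r}"
    then have r: "\<bar>fst p - fst v\<bar> + \<bar>snd p - snd v\<bar> = int r"
      by (simp add: grid_dist_def)
    define x where "x = nat (fst p - fst v + int r)"
    show "p \<in> sphere_point v r ` {0..<sphere_slots r}"
    proof (cases "snd p \<ge> snd v")
      case True
      then have "sphere_point v r x = p"
        using r by (auto simp: sphere_point_def x_def prod_eq_iff)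
      moreover have "x < sphere_slots r"
        using r by (simp add: x_def sphere_slots_def)
      ultimately show ?thesis by force
    next
      case False
      then have "sphere_point v r (2*r + 1 + x) = p"
        using r by (auto simp: sphere_point_def x_def prod_eq_iff)
      moreover have "2*r + 1 + x < sphere_slots r"
        using r by (simp add: x_def sphere_slots_def)
      ultimately show ?thesis by force
    qed
  qed
qed

text \<open>\<open>ring_state f i = (r, c)\<close>: after turn \<open>i\<close> the sphere of radius \<open>r\<close> is under construction
  and its first \<open>c\<close> slots are protected. At turn \<open>i + 1\<close> the sphere is abandoned if \<open>r \<le> i\<close>, since the
  fire may then reach it.\<close>
fun ring_state :: "(nat \<Rightarrow> nat) \<Rightarrow> nat \<Rightarrow> nat \<times> nat" where
  "ring_state f 0 = (0, 0)"
| "ring_state f (Suc i) =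
     (let (r, c) = ring_state f i
      in if r \<le> i then (2 * Suc i, min (f (Suc i)) (sphere_slots (2 * Suc i)))
         else (r, min (c + f (Suc i)) (sphere_slots r)))"

abbreviation ring_radius :: "(nat \<Rightarrow> nat) \<Rightarrow> nat \<Rightarrow> nat" where
  "ring_radius f i \<equiv> fst (ring_state f i)"

abbreviation ring_filled :: "(nat \<Rightarrow> nat) \<Rightarrow> nat \<Rightarrow> nat" where
  "ring_filled f i \<equiv> snd (ring_state f i)"

lemma ring_state_Suc:
  "ring_state f (Suc i) =
     (if ring_radius f i \<le> i then (2 * Suc i, min (f (Suc i)) (sphere_slots (2 * Suc i)))
      else (ring_radius f i, min (ring_filled f i + f (Suc i)) (sphere_slots (ring_radius f i))))"
  by (simp add: case_prod_beta)

declare ring_state.simps(2) [simp del]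

lemma ring_radius_ge: "1 \<le> i \<Longrightarrow> i \<le> ring_radius f i"
  by (cases i) (auto simp: ring_state_Suc)

lemma ring_filled_le_slots: "ring_filled f i \<le> sphere_slots (ring_radius f i)"
  by (cases i) (auto simp: ring_state_Suc)

definition ring_built :: "vertex \<Rightarrow> (nat \<Rightarrow> nat) \<Rightarrow> nat \<Rightarrow> vertex set" where
  "ring_built v f i = sphere_point v (ring_radius f i) ` {0..<ring_filled f i}"

definition ring_protected :: "vertex \<Rightarrow> (nat \<Rightarrow> nat) \<Rightarrow> nat \<Rightarrow> vertex set" where
  "ring_protected v f i = (\<Union>j\<in>{1..i}. ring_built v f j)"

definition ring_move :: "vertex \<Rightarrow> (nat \<Rightarrow> nat) \<Rightarrow> nat \<Rightarrow> vertex set" where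
  "ring_move v f i = ring_built v f i - ring_protected v f (i - 1)"

definition ring_strategy :: strategy where
  "ring_strategy v xs = ring_move v (\<lambda>j. xs ! (j - 1)) (length xs)"

lemma ring_built_subset_protected: "ring_built v f i \<subseteq> ring_protected v f i"
  unfolding ring_protected_def
  by (cases "i = 0") (simp add: ring_built_def, rule UN_upper, simp)

lemma ring_state_cong:
  "(\<And>j. 1 \<le> j \<Longrightarrow> j \<le> i \<Longrightarrow> g j = f j) \<Longrightarrow> ring_state g i = ring_state f i"
  by (induction i) (simp_all add: ring_state_Suc)

lemma ring_move_cong:
  assumes "\<And>j. 1 \<le> j \<Longrightarrow> j \<le> i \<Longrightarrow> g j = f j"
  shows "ring_move v g i = ring_move v f i"
proof -
  have built: "ring_built v g j = ring_built v f j" if "j \<le> i" for j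
    unfolding ring_built_def using ring_state_cong[of j g f] assms that by simp
  then have "ring_protected v g (i - 1) = ring_protected v f (i - 1)"
    unfolding ring_protected_def by (intro SUP_cong) auto
  then show ?thesis
    using built by (simp add: ring_move_def)
qed

lemma move_ring_strategy: "move v ring_strategy f i = ring_move v f i"
proof -
  have "ring_move v (\<lambda>j. map f [1..<Suc i] ! (j - 1)) i = ring_move v f i"
    by (rule ring_move_cong) (simp del: upt_Suc add: nth_map_upt)
  then show ?thesis
    by (simp del: upt_Suc add: move_def ring_strategy_def)
qed

lemma protected_ring_strategy: "snd (play v ring_strategy f i) = ring_protected v f i"
proof (induction i)
  case (Suc i)
  have "ring_protected v f (Suc i) = ring_protected v f i \<union> ring_built v f (Suc i)"
    by (simp add: ring_protected_def atLeastAtMostSuc_conv Un_commute)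
  then show ?case
    using Suc.IH by (auto simp: play_Suc_snd move_ring_strategy ring_move_def)
qed (simp add: ring_protected_def)

lemma grid_dist_ring_built:
  assumes "p \<in> ring_built v f i"
  shows "grid_dist v p = int (ring_radius f i)"
proof -
  obtain k where "k < ring_filled f i" "p = sphere_point v (ring_radius f i) k"
    using assms unfolding ring_built_def by auto
  then show ?thesis
    using ring_filled_le_slots[of f i] grid_dist_sphere_point by simp
qed

lemma ring_state_Suc_cases:
  obtains "ring_filled f (Suc i) \<le> f (Suc i)"
  | "ring_radius f (Suc i) = ring_radius f i" "ring_filled f (Suc i) \<le> ring_filled f i + f (Suc i)"
  using that by (cases "ring_radius f i \<le> i") (simp_all add: ring_state_Suc)

lemma card_ring_move_le: "card (ring_move v f (Suc i)) \<le> f (Suc i)"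
proof (cases rule: ring_state_Suc_cases[of f i])
  case 1
  have "card (ring_move v f (Suc i)) \<le> card (ring_built v f (Suc i))"
    by (rule card_mono) (auto simp: ring_move_def ring_built_def)
  also have "\<dots> \<le> ring_filled f (Suc i)"
    unfolding ring_built_def using card_image_le[of "{0..<ring_filled f (Suc i)}"] by simp
  finally show ?thesis using 1 by simp
next
  case 2
  let ?new = "sphere_point v (ring_radius f i) ` {ring_filled f i..<ring_filled f (Suc i)}"
  have "ring_move v f (Suc i) \<subseteq> ?new"
  proof
    fix p assume "p \<in> ring_move v f (Suc i)"
    then obtain k where k: "k < ring_filled f (Suc i)" "p = sphere_point v (ring_radius f i) k"
      and "p \<notin> ring_protected v f i"
      using 2 by (auto simp: ring_move_def ring_built_def)
    then have "\<not> k < ring_filled f i"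
      using ring_built_subset_protected[of v f i] by (auto simp: ring_built_def image_subset_iff)
    then show "p \<in> ?new"
      using k by simp
  qed
  then have "card (ring_move v f (Suc i)) \<le> card ?new"
    by (rule card_mono[rotated]) simp
  also have "\<dots> \<le> ring_filled f (Suc i) - ring_filled f i"
    using card_image_le[of "{ring_filled f i..<ring_filled f (Suc i)}"] by simp
  finally show ?thesis using 2 by linarith
qed

lemma burning_inside_ring_radius:
  "1 \<le> i \<Longrightarrow> p \<in> fst (play v \<sigma> f (i - 1)) \<Longrightarrow> grid_dist v p < int (ring_radius f i)"
  using burning_within_dist[of v \<sigma> f "i - 1"] ring_radius_ge[of i f] by force

lemma ring_strategy_legal:
  assumes "1 \<le> i"
  shows "legal v ring_strategy f i"
proof -
  obtain i' where i: "i = Suc i'"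
    using assms by (cases i) auto
  have "p \<notin> fst (play v ring_strategy f (i - 1))" if "p \<in> ring_move v f i" for p
  proof
    assume "p \<in> fst (play v ring_strategy f (i - 1))"
    then have "grid_dist v p < int (ring_radius f i)"
      by (rule burning_inside_ring_radius[OF assms])
    moreover have "grid_dist v p = int (ring_radius f i)"
      using that grid_dist_ring_built by (simp add: ring_move_def)
    ultimately show False by simp
  qed
  then have "ring_move v f i \<inter> fst (play v ring_strategy f (i - 1)) = {}"
    by blast
  moreover have "ring_move v f i \<inter> ring_protected v f (i - 1) = {}"
    by (auto simp: ring_move_def)
  moreover have "finite (ring_move v f i)"
    by (simp add: ring_move_def ring_built_def)
  moreover have "card (ring_move v f i) \<le> f i"
    using card_ring_move_le[of v f i'] unfolding i .
  ultimately show ?thesis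
    unfolding legal_def Let_def move_ring_strategy protected_ring_strategy
    by (simp add: Int_Un_distrib)
qed

definition ring_completed :: "(nat \<Rightarrow> nat) \<Rightarrow> nat \<Rightarrow> bool" where
  "ring_completed f i \<longleftrightarrow> ring_filled f i = sphere_slots (ring_radius f i)"

lemma ring_budget:
  assumes "1 \<le> i" and "\<forall>j\<in>{1..i}. \<not> ring_completed f j"
  shows "ring_radius f i \<le> 2 * i \<and> (\<Sum>k=1..i. f k) + 8 \<le> ring_filled f i + 4 * ring_radius f i"
  using assms
proof (induction i rule: nat_induct_at_least)
  case base
  then show ?case
    using ring_state_Suc[of f 0] by (simp add: ring_completed_def sphere_slots_def)
next
  case (Suc i)
  then have IH: "ring_radius f i \<le> 2 * i"
      "(\<Sum>k=1..i. f k) + 8 \<le> ring_filled f i + 4 * ring_radius f i"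
    by auto
  have "\<not> ring_completed f i" "\<not> ring_completed f (Suc i)"
    using Suc.prems Suc.hyps by auto
  then have open_rings: "ring_filled f i < sphere_slots (ring_radius f i)"
      "ring_filled f (Suc i) < sphere_slots (ring_radius f (Suc i))"
    using ring_filled_le_slots[of f i] ring_filled_le_slots[of f "Suc i"]
    by (simp_all add: ring_completed_def order_less_le)
  have "i \<le> ring_radius f i"
    using ring_radius_ge[OF Suc.hyps] .
  show ?case
  proof (cases "ring_radius f i \<le> i")
    case True
    then show ?thesis
      using IH open_rings \<open>i \<le> ring_radius f i\<close> ring_state_Suc[of f i]
      by (simp add: sphere_slots_def)
  next
    case False
    then show ?thesis
      using IH open_rings ring_state_Suc[of f i]
      by (simp add: sphere_slots_def)
  qed
qed

lemma ring_completed_by_budget: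
  assumes "1 \<le> N" and "16 * N \<le> (\<Sum>i=1..N. f i)"
  shows "\<exists>j\<in>{1..N}. ring_completed f j"
proof (rule ccontr)
  assume "\<not> ?thesis"
  then have "ring_radius f N \<le> 2 * N"
      "(\<Sum>k=1..N. f k) + 8 \<le> ring_filled f N + 4 * ring_radius f N"
    using ring_budget[OF \<open>1 \<le> N\<close>] by auto
  then show False
    using assms(2) ring_filled_le_slots[of f N] by (simp add: sphere_slots_def)
qed

lemma ring_strategy_wins_if_completed:
  assumes "1 \<le> j" and "ring_completed f j"
  shows "P1_wins v ring_strategy f"
proof (rule P1_wins_if_fire_confined)
  let ?R = "int (ring_radius f j)"
  have "{p. grid_dist v p = ?R} \<subseteq> snd (play v ring_strategy f (Suc (j - 1)))"
    using assms sphere_eq_sphere_point_image[of v "ring_radius f j"]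
    by (auto simp: ring_completed_def protected_ring_strategy ring_protected_def ring_built_def)
  moreover have "fst (play v ring_strategy f (j - 1)) \<subseteq> {p. grid_dist v p < ?R}"
    using burning_inside_ring_radius[OF \<open>1 \<le> j\<close>] by blast
  ultimately show "fst (play v ring_strategy f n) \<subseteq> {p. grid_dist v p < ?R}" if "j - 1 \<le> n" for n
    using fire_confined_by_protected_sphere that by blast
qed (simp_all add: ring_strategy_legal finite_grid_ball)

theorem theorem3:
  shows "\<exists>\<sigma> :: strategy. \<forall>(v :: vertex) (f :: nat \<Rightarrow> nat).
           (\<exists>N\<ge>1. (\<Sum>i=1..N. f i) \<ge> 16 * N) \<longrightarrow> P1_wins v \<sigma> f"
proof (intro exI allI impI)
  fix v :: vertex and f :: "nat \<Rightarrow> nat"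
  assume "\<exists>N\<ge>1. (\<Sum>i=1..N. f i) \<ge> 16 * N"
  then obtain j where "1 \<le> j" "ring_completed f j"
    using ring_completed_by_budget by fastforce
  then show "P1_wins v ring_strategy f"
    by (rule ring_strategy_wins_if_completed)
qed

end
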